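(* Let $0<\varepsilon\le 0.1$, let $\Box$ be a closed axis-parallel square of side length $\varepsilon$, and let $R\subseteq\Box$ be any set. For any points $o\in\Box$ and $p\in R\oplus D$, the segment $\overline{op}$ is contained in $R\oplus D$, and moreover the relative interior of $\overline{op}$ is contained in the interior of $R\oplus D$.
   Context: $D$ is the closed unit disk centered at the origin and $\oplus$ denotes Minkowski sum. *)

theory Defs
  imports "HOL-Analysis.Analysis"
begin

definition unit_disk :: "(real \<times> real) set" where
  "unit_disk = cball 0 1"

definition minkowski_sum :: "(real \<times> real) set \<Rightarrow> (real \<times> real) set \<Rightarrow> (real \<times> real) set"
  (infixl "\<oplus>" 65) where
  "A \<oplus> B = {a + b | a b. a \<in> A \<and> b \<in> B}"

definition axis_square :: "real \<Rightarrow> real \<Rightarrow> real \<Rightarrow> (real \<times> real) set" where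
  "axis_square a b s = {(x, y). a \<le> x \<and> x \<le> a + s \<and> b \<le> y \<and> y \<le> b + s}"

end

theory Submission
  imports Defs
begin

text \<open>Write \<open>p = r + d\<close> with \<open>r \<in> R\<close> and \<open>|d| \<le> 1\<close>; the whole disk \<open>cball r 1\<close> lies in
  \<open>R \<oplus> D\<close>. Since \<open>q\<close> and \<open>r\<close> lie in a square of diameter \<open>\<surd>2 \<epsilon> < 1\<close>, \<open>q\<close> is an interior point
  of that disk while \<open>p\<close> is in its closure, so by convexity the segment lies in the disk and
  its relative interior in the open disk.\<close>

lemma cball_subset_minkowski_unit_disk:
  assumes "r \<in> R"
  shows "cball r 1 \<subseteq> R \<oplus> unit_disk"
proof
  fix x assume "x \<in> cball r 1"
  then have "x - r \<in> unit_disk" by (simp add: unit_disk_def dist_norm norm_minus_commute)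
  moreover have "x = r + (x - r)" by simp
  ultimately show "x \<in> R \<oplus> unit_disk"
    unfolding minkowski_sum_def using assms by blast
qed

lemma minkowski_unit_disk_memE:
  assumes "p \<in> R \<oplus> unit_disk"
  obtains r where "r \<in> R" and "p \<in> cball r 1"
proof -
  obtain r d where "r \<in> R" "d \<in> unit_disk" "p = r + d"
    using assms unfolding minkowski_sum_def by blast
  then show thesis
    using that[of r] by (simp add: unit_disk_def dist_norm)
qed

lemma dist_axis_square_le:
  assumes "x \<in> axis_square a b s" and "y \<in> axis_square a b s"
  shows "dist x y \<le> sqrt 2 * s"
proof -
  obtain x1 x2 y1 y2 where xy: "x = (x1, x2)" "y = (y1, y2)" by fastforce
  have "\<bar>x1 - y1\<bar> \<le> s" "\<bar>x2 - y2\<bar> \<le> s" "0 \<le> s"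
    using assms by (auto simp: axis_square_def xy)
  then have "(x1 - y1)\<^sup>2 \<le> s\<^sup>2" "(x2 - y2)\<^sup>2 \<le> s\<^sup>2"
    by (metis abs_ge_zero power2_abs power_mono)+
  then have "sqrt ((x1 - y1)\<^sup>2 + (x2 - y2)\<^sup>2) \<le> sqrt (2 * s\<^sup>2)"
    by (intro real_sqrt_le_mono) simp
  also have "\<dots> = sqrt 2 * s"
    using \<open>0 \<le> s\<close> by (simp add: real_sqrt_mult)
  finally show ?thesis by (simp add: xy dist_Pair_Pair dist_real_def)
qed

lemma segment_from_ball_to_cball:
  fixes r q p :: "'a::euclidean_space"
  assumes q: "q \<in> ball r e" and p: "p \<in> cball r e"
  shows "closed_segment q p \<subseteq> cball r e"
    and "rel_interior (closed_segment q p) \<subseteq> ball r e"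
proof -
  show "closed_segment q p \<subseteq> cball r e"
    using q p by (simp add: closed_segment_subset)
  have "0 < e" using q by (meson dist_not_less_zero less_le_trans mem_ball not_le)
  then have "open_segment q p \<subseteq> ball r e"
    using in_interior_closure_convex_segment[of "ball r e" q p] q p by simp
  then show "rel_interior (closed_segment q p) \<subseteq> ball r e"
    using q by (auto simp: rel_interior_closed_segment)
qed

theorem mainTheorem7:
  fixes \<epsilon> a b :: real and R :: "(real \<times> real) set" and q p :: "real \<times> real"
  assumes "0 < \<epsilon>" and "\<epsilon> \<le> 0.1"
    and "R \<subseteq> axis_square a b \<epsilon>"
    and "q \<in> axis_square a b \<epsilon>"
    and "p \<in> R \<oplus> unit_disk"
  shows "closed_segment q p \<subseteq> R \<oplus> unit_disk
    \<and> rel_interior (closed_segment q p) \<subseteq> interior (R \<oplus> unit_disk)"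
proof -
  obtain r where r: "r \<in> R" and p: "p \<in> cball r 1"
    using assms(5) by (rule minkowski_unit_disk_memE)
  have "dist r q \<le> sqrt 2 * \<epsilon>"
    using r assms(3,4) by (blast intro: dist_axis_square_le)
  moreover have "sqrt 2 * \<epsilon> < 2 * \<epsilon>"
    using assms(1) sqrt2_less_2 by (rule mult_strict_right_mono[rotated])
  ultimately have q: "q \<in> ball r 1" using assms(2) by simp
  have disk: "cball r 1 \<subseteq> R \<oplus> unit_disk"
    using r by (rule cball_subset_minkowski_unit_disk)
  then have "ball r 1 \<subseteq> interior (R \<oplus> unit_disk)"
    by (meson ball_subset_cball interior_maximal open_ball order_trans)
  then show ?thesis
    using segment_from_ball_to_cball[OF q p] disk by blast
qed

end
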